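(* Let $R$ be a commutative ring, $M$ an $R$-module and $\mathfrak{p}\in\mathrm{Spec}(R)$. Then $R/\mathfrak{p} \prec M$ in $\mathrm{Mod}(R)$ if and only if $M_{\mathfrak{p}} \neq 0$.
   Context: For $R$-modules $M,N$, $M\prec N$ means $M$ is a subquotient of a direct sum of (possibly infinitely many) copies of $N$. *)

theory Defs
  imports "HOL-Algebra.Module" "HOL-Algebra.QuotRing"
begin

text \<open>Direct sum of copies of the R-module N indexed by the set I:
  finitely supported families (vanishing outside I), with pointwise operations.
  (The ring fields mult/one of the module record are irrelevant for modules.)\<close>
definition dsum_copies ::
  "('a, 'r) ring_scheme \<Rightarrow> ('a, 'b, 'm) module_scheme \<Rightarrow> 'c set \<Rightarrow> ('a, 'c \<Rightarrow> 'b) module" where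
  "dsum_copies R N I =
    \<lparr> carrier = {f. (\<forall>i. f i \<in> carrier N) \<and> (\<forall>i. i \<notin> I \<longrightarrow> f i = \<zero>\<^bsub>N\<^esub>)
                    \<and> finite {i. f i \<noteq> \<zero>\<^bsub>N\<^esub>}},
      mult = (\<lambda>f g i. \<zero>\<^bsub>N\<^esub>),
      one = (\<lambda>i. \<zero>\<^bsub>N\<^esub>),
      zero = (\<lambda>i. \<zero>\<^bsub>N\<^esub>),
      add = (\<lambda>f g i. f i \<oplus>\<^bsub>N\<^esub> g i),
      smult = (\<lambda>r f i. r \<odot>\<^bsub>N\<^esub> f i) \<rparr>"

definition quot_module :: "('a, 'r) ring_scheme \<Rightarrow> 'a set \<Rightarrow> ('a, 'a set) module" where
  "quot_module R I =
    \<lparr> carrier = carrier (R Quot I),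
      mult = mult (R Quot I),
      one = one (R Quot I),
      zero = zero (R Quot I),
      add = add (R Quot I),
      smult = (\<lambda>r X. (I +>\<^bsub>R\<^esub> r) \<otimes>\<^bsub>R Quot I\<^esub> X) \<rparr>"

definition linear_on ::
  "('a, 'r) ring_scheme \<Rightarrow> ('a, 'b, 'm) module_scheme \<Rightarrow> 'b set \<Rightarrow> ('a, 'd, 'n) module_scheme
   \<Rightarrow> ('b \<Rightarrow> 'd) \<Rightarrow> bool" where
  "linear_on R A K B f \<longleftrightarrow>
     f \<in> K \<rightarrow> carrier B \<and>
     (\<forall>x\<in>K. \<forall>y\<in>K. f (x \<oplus>\<^bsub>A\<^esub> y) = f x \<oplus>\<^bsub>B\<^esub> f y) \<and>
     (\<forall>r\<in>carrier R. \<forall>x\<in>K. f (r \<odot>\<^bsub>A\<^esub> x) = r \<odot>\<^bsub>B\<^esub> f x)"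

text \<open>X \<prec> N: X is a subquotient of a direct sum of copies of N, i.e. there is an
  index set I (of type 'c), a submodule K of the direct sum of I copies of N and a
  surjective R-linear map K \<rightarrow> X (so X \<cong> K / ker).\<close>
definition subquot_of_sum ::
  "('a, 'r) ring_scheme \<Rightarrow> ('a, 'd, 'n) module_scheme \<Rightarrow> ('a, 'b, 'm) module_scheme
   \<Rightarrow> 'c itself \<Rightarrow> bool" where
  "subquot_of_sum R X N (_ :: 'c itself) \<longleftrightarrow>
     (\<exists>(I :: 'c set) K f. submodule K R (dsum_copies R N I)
        \<and> linear_on R (dsum_copies R N I) K X f \<and> f ` K = carrier X)"

definition loc_rel ::
  "('a, 'r) ring_scheme \<Rightarrow> ('a, 'b, 'm) module_scheme \<Rightarrow> 'a set \<Rightarrow> (('b \<times> 'a) \<times> ('b \<times> 'a)) set" where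
  "loc_rel R M p = {((m, s), (m', s')).
      m \<in> carrier M \<and> m' \<in> carrier M \<and> s \<in> carrier R - p \<and> s' \<in> carrier R - p \<and>
      (\<exists>u \<in> carrier R - p. u \<odot>\<^bsub>M\<^esub> ((s' \<odot>\<^bsub>M\<^esub> m) \<ominus>\<^bsub>M\<^esub> (s \<odot>\<^bsub>M\<^esub> m')) = \<zero>\<^bsub>M\<^esub>)}"

definition loc_carrier :: "('a, 'r) ring_scheme \<Rightarrow> ('a, 'b, 'm) module_scheme \<Rightarrow> 'a set \<Rightarrow> ('b \<times> 'a) set set" where
  "loc_carrier R M p = (carrier M \<times> (carrier R - p)) // loc_rel R M p"

definition loc_zero :: "('a, 'r) ring_scheme \<Rightarrow> ('a, 'b, 'm) module_scheme \<Rightarrow> 'a set \<Rightarrow> ('b \<times> 'a) set" where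
  "loc_zero R M p = loc_rel R M p `` {(\<zero>\<^bsub>M\<^esub>, \<one>\<^bsub>R\<^esub>)}"

definition loc_nonzero :: "('a, 'r) ring_scheme \<Rightarrow> ('a, 'b, 'm) module_scheme \<Rightarrow> 'a set \<Rightarrow> bool" where
  "loc_nonzero R M p \<longleftrightarrow> loc_carrier R M p \<noteq> {loc_zero R M p}"

end

theory Submission
  imports Defs
begin

(*
  M_p \<noteq> 0 exactly when some m \<in> M is killed by no s \<notin> p.  For such an m the cyclic
  submodule R m maps onto R/p by r m \<mapsto> r + p, which is well defined because
  (r - s) m = 0 forces r - s \<in> p; placing R m in a single copy of M exhibits R/p \<prec> M.
  Conversely, if every element of M is killed by some s \<notin> p, then so is every element of a
  direct sum of copies of M (multiply the finitely many multipliers of its support, using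
  that p is prime), and this property passes to images under linear maps; but the class of
  1 in R/p is killed by no s \<notin> p.
*)

text \<open>\<open>vanishes_at R M p x\<close> says that \<open>x/1 = 0\<close> in the localisation \<open>M\<^sub>p\<close>.\<close>
definition vanishes_at ::
  "('a, 'r) ring_scheme \<Rightarrow> ('a, 'b, 'm) module_scheme \<Rightarrow> 'a set \<Rightarrow> 'b \<Rightarrow> bool" where
  "vanishes_at R M p x \<longleftrightarrow> (\<exists>u \<in> carrier R - p. u \<odot>\<^bsub>M\<^esub> x = \<zero>\<^bsub>M\<^esub>)"

lemma (in primeideal) one_in_compl: "\<one> \<in> carrier R - I"
  using I_notcarr one_imp_carrier by auto

lemma (in primeideal) compl_mult_closed:
  "a \<in> carrier R - I \<Longrightarrow> b \<in> carrier R - I \<Longrightarrow> a \<otimes> b \<in> carrier R - I"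
  using I_prime by auto

lemma loc_rel_iff:
  "((m, s), (m', s')) \<in> loc_rel R M p \<longleftrightarrow>
     m \<in> carrier M \<and> m' \<in> carrier M \<and> s \<in> carrier R - p \<and> s' \<in> carrier R - p \<and>
     vanishes_at R M p ((s' \<odot>\<^bsub>M\<^esub> m) \<ominus>\<^bsub>M\<^esub> (s \<odot>\<^bsub>M\<^esub> m'))"
  unfolding loc_rel_def vanishes_at_def by blast

lemma not_loc_nonzero_if_all_vanish:
  assumes "module R M" and "primeideal p R"
    and all: "\<And>m. m \<in> carrier M \<Longrightarrow> vanishes_at R M p m"
  shows "\<not> loc_nonzero R M p"
proof -
  interpret M: module R M by fact
  interpret P: primeideal p R by fact
  define A where "A = carrier M \<times> (carrier R - p)"
  have "((m, s), (m', s')) \<in> loc_rel R M p" if "(m, s) \<in> A" "(m', s') \<in> A" for m s m' s'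
  proof -
    have "(s' \<odot>\<^bsub>M\<^esub> m) \<ominus>\<^bsub>M\<^esub> (s \<odot>\<^bsub>M\<^esub> m') \<in> carrier M"
      using that unfolding A_def by (simp add: M.minus_closed)
    then show ?thesis
      using that all unfolding loc_rel_iff A_def by blast
  qed
  then have "A \<times> A \<subseteq> loc_rel R M p"
    by auto
  moreover have "loc_rel R M p \<subseteq> A \<times> A"
    unfolding loc_rel_def A_def by auto
  ultimately have "loc_rel R M p = A \<times> A"
    by blast
  then have "loc_rel R M p `` {x} = A" if "x \<in> A" for x
    using that by blast
  moreover have "(\<zero>\<^bsub>M\<^esub>, \<one>\<^bsub>R\<^esub>) \<in> A"
    unfolding A_def using P.one_in_compl by simp
  ultimately have "loc_carrier R M p = {A}" and "loc_zero R M p = A"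
    unfolding loc_carrier_def loc_zero_def A_def[symmetric] quotient_def by blast+
  then show ?thesis
    unfolding loc_nonzero_def by simp
qed

lemma loc_nonzero_if_nonvanishing:
  assumes "module R M" and "primeideal p R"
    and m: "m \<in> carrier M" and nv: "\<not> vanishes_at R M p m"
  shows "loc_nonzero R M p"
proof -
  interpret M: module R M by fact
  interpret P: primeideal p R by fact
  have "vanishes_at R M p ((\<one>\<^bsub>R\<^esub> \<odot>\<^bsub>M\<^esub> m) \<ominus>\<^bsub>M\<^esub> (\<one>\<^bsub>R\<^esub> \<odot>\<^bsub>M\<^esub> m))"
    using m P.one_in_compl unfolding vanishes_at_def by (auto simp: M.r_neg a_minus_def)
  then have "((m, \<one>\<^bsub>R\<^esub>), (m, \<one>\<^bsub>R\<^esub>)) \<in> loc_rel R M p"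
    using m P.one_in_compl unfolding loc_rel_iff by blast
  moreover have "((\<zero>\<^bsub>M\<^esub>, \<one>\<^bsub>R\<^esub>), (m, \<one>\<^bsub>R\<^esub>)) \<notin> loc_rel R M p"
  proof
    assume "((\<zero>\<^bsub>M\<^esub>, \<one>\<^bsub>R\<^esub>), (m, \<one>\<^bsub>R\<^esub>)) \<in> loc_rel R M p"
    then have "vanishes_at R M p ((\<one>\<^bsub>R\<^esub> \<odot>\<^bsub>M\<^esub> \<zero>\<^bsub>M\<^esub>) \<ominus>\<^bsub>M\<^esub> (\<one>\<^bsub>R\<^esub> \<odot>\<^bsub>M\<^esub> m))"
      unfolding loc_rel_iff by blast
    moreover have "(\<one>\<^bsub>R\<^esub> \<odot>\<^bsub>M\<^esub> \<zero>\<^bsub>M\<^esub>) \<ominus>\<^bsub>M\<^esub> (\<one>\<^bsub>R\<^esub> \<odot>\<^bsub>M\<^esub> m) = \<ominus>\<^bsub>M\<^esub> m"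
      using m by (simp add: a_minus_def)
    ultimately obtain u where u: "u \<in> carrier R - p" "u \<odot>\<^bsub>M\<^esub> (\<ominus>\<^bsub>M\<^esub> m) = \<zero>\<^bsub>M\<^esub>"
      unfolding vanishes_at_def by auto
    then have "u \<odot>\<^bsub>M\<^esub> m = \<zero>\<^bsub>M\<^esub>"
      using m by (simp add: M.smult_r_minus)
    with u nv show False
      unfolding vanishes_at_def by blast
  qed
  ultimately have "loc_rel R M p `` {(m, \<one>\<^bsub>R\<^esub>)} \<noteq> loc_zero R M p"
    unfolding loc_zero_def by (auto simp only: Image_singleton_iff)
  moreover have "loc_rel R M p `` {(m, \<one>\<^bsub>R\<^esub>)} \<in> loc_carrier R M p"
    unfolding loc_carrier_def using m P.one_in_compl by (intro quotientI) simp
  ultimately show ?thesis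
    unfolding loc_nonzero_def by auto
qed

lemma loc_nonzero_iff_ex_nonvanishing:
  assumes "module R M" and "primeideal p R"
  shows "loc_nonzero R M p \<longleftrightarrow> (\<exists>m \<in> carrier M. \<not> vanishes_at R M p m)"
  using not_loc_nonzero_if_all_vanish[OF assms] loc_nonzero_if_nonvanishing[OF assms] by blast

lemma vanishes_at_common_multiplier:
  assumes "module R M" and "primeideal p R" and "finite S"
    and "\<And>i. i \<in> S \<Longrightarrow> x i \<in> carrier M \<and> vanishes_at R M p (x i)"
  shows "\<exists>u \<in> carrier R - p. \<forall>i \<in> S. u \<odot>\<^bsub>M\<^esub> x i = \<zero>\<^bsub>M\<^esub>"
  using assms(3,4)
proof (induction S rule: finite_induct)
  case empty
  show ?case
    using primeideal.one_in_compl[OF assms(2)] by blast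
next
  case (insert j S)
  interpret M: module R M by fact
  interpret P: primeideal p R by fact
  obtain u where u: "u \<in> carrier R - p" "\<forall>i \<in> S. u \<odot>\<^bsub>M\<^esub> x i = \<zero>\<^bsub>M\<^esub>"
    using insert by blast
  obtain v where v: "v \<in> carrier R - p" "v \<odot>\<^bsub>M\<^esub> x j = \<zero>\<^bsub>M\<^esub>"
    using insert.prems unfolding vanishes_at_def by blast
  have "(u \<otimes>\<^bsub>R\<^esub> v) \<odot>\<^bsub>M\<^esub> x i = \<zero>\<^bsub>M\<^esub>" if "i \<in> insert j S" for i
  proof -
    have "x i \<in> carrier M"
      using that insert.prems by blast
    then have "(u \<otimes>\<^bsub>R\<^esub> v) \<odot>\<^bsub>M\<^esub> x i = u \<odot>\<^bsub>M\<^esub> (v \<odot>\<^bsub>M\<^esub> x i)"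
      and "(u \<otimes>\<^bsub>R\<^esub> v) \<odot>\<^bsub>M\<^esub> x i = v \<odot>\<^bsub>M\<^esub> (u \<odot>\<^bsub>M\<^esub> x i)"
      using u v by (simp add: M.smult_assoc1, simp add: M.m_comm[of u v] M.smult_assoc1)
    then show ?thesis
      using that u v by auto
  qed
  moreover have "u \<otimes>\<^bsub>R\<^esub> v \<in> carrier R - p"
    using u(1) v(1) by (rule P.compl_mult_closed)
  ultimately show ?case
    by blast
qed

lemma dsum_copies_module:
  assumes "module R M"
  shows "module R (dsum_copies R M I)"
proof -
  interpret M: module R M by fact
  have fin_union: "finite {i. f i \<oplus>\<^bsub>M\<^esub> g i \<noteq> \<zero>\<^bsub>M\<^esub>}"
    if "finite {i. f i \<noteq> \<zero>\<^bsub>M\<^esub>}" "finite {i. g i \<noteq> \<zero>\<^bsub>M\<^esub>}" "\<And>i. g i \<in> carrier M" for f g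
    by (rule finite_subset[OF _ finite_UnI[OF that(1,2)]]) (auto simp: that(3))
  have fin_smult: "finite {i. a \<odot>\<^bsub>M\<^esub> f i \<noteq> \<zero>\<^bsub>M\<^esub>}" if "a \<in> carrier R" "finite {i. f i \<noteq> \<zero>\<^bsub>M\<^esub>}" for a f
    by (rule finite_subset[OF _ that(2)]) (auto simp: that(1))
  have fin_minus: "finite {i. \<ominus>\<^bsub>M\<^esub> f i \<noteq> \<zero>\<^bsub>M\<^esub>}" if "finite {i. f i \<noteq> \<zero>\<^bsub>M\<^esub>}" for f
    by (rule finite_subset[OF _ that]) auto
  show ?thesis
  proof (rule moduleI)
    show "cring R"
      by (rule M.is_cring)
    show "abelian_group (dsum_copies R M I)"
    proof (rule abelian_groupI)
      fix x assume x: "x \<in> carrier (dsum_copies R M I)"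
      show "\<exists>y \<in> carrier (dsum_copies R M I). y \<oplus>\<^bsub>dsum_copies R M I\<^esub> x = \<zero>\<^bsub>dsum_copies R M I\<^esub>"
        using x fin_minus by (intro bexI[of _ "\<lambda>i. \<ominus>\<^bsub>M\<^esub> x i"]) (auto simp: dsum_copies_def M.l_neg)
    qed (auto simp: dsum_copies_def fin_union M.a_ac)
  qed (auto simp: dsum_copies_def fin_smult M.smult_l_distr M.smult_r_distr M.smult_assoc1)
qed

lemma dsum_copies_minus:
  assumes "module R M" and "x \<in> carrier (dsum_copies R M I)"
  shows "\<ominus>\<^bsub>dsum_copies R M I\<^esub> x = (\<lambda>i. \<ominus>\<^bsub>M\<^esub> x i)"
proof -
  interpret M: module R M by fact
  interpret D: module R "dsum_copies R M I"
    using assms(1) by (rule dsum_copies_module)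
  have "finite {i. \<ominus>\<^bsub>M\<^esub> x i \<noteq> \<zero>\<^bsub>M\<^esub>}"
    using assms(2) by (auto simp: dsum_copies_def elim: finite_subset[rotated])
  then have closed: "(\<lambda>i. \<ominus>\<^bsub>M\<^esub> x i) \<in> carrier (dsum_copies R M I)"
    using assms(2) by (simp add: dsum_copies_def)
  have "(\<lambda>i. \<ominus>\<^bsub>M\<^esub> x i) \<oplus>\<^bsub>dsum_copies R M I\<^esub> x = \<zero>\<^bsub>dsum_copies R M I\<^esub>"
    using assms(2) by (simp add: dsum_copies_def M.l_neg)
  then show ?thesis
    using assms(2) closed by (rule D.minus_equality)
qed

lemma dsum_copies_vanishes_at:
  assumes "module R M" and "primeideal p R" and "x \<in> carrier (dsum_copies R M I)"
    and "\<And>i. vanishes_at R M p (x i)"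
  shows "vanishes_at R (dsum_copies R M I) p x"
proof -
  interpret M: module R M by fact
  have x: "\<And>i. x i \<in> carrier M" "finite {i. x i \<noteq> \<zero>\<^bsub>M\<^esub>}"
    using assms(3) by (auto simp: dsum_copies_def)
  then obtain u where u: "u \<in> carrier R - p" "\<forall>i \<in> {i. x i \<noteq> \<zero>\<^bsub>M\<^esub>}. u \<odot>\<^bsub>M\<^esub> x i = \<zero>\<^bsub>M\<^esub>"
    using vanishes_at_common_multiplier[OF assms(1,2) x(2)] x(1) assms(4) by blast
  then have "u \<odot>\<^bsub>M\<^esub> x i = \<zero>\<^bsub>M\<^esub>" for i
    by (cases "x i = \<zero>\<^bsub>M\<^esub>") auto
  with u show ?thesis
    unfolding vanishes_at_def by (auto simp: dsum_copies_def)
qed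

lemma quot_module_carrier:
  "carrier (quot_module R I) = (\<lambda>r. I +>\<^bsub>R\<^esub> r) ` carrier R"
  by (auto simp: quot_module_def FactRing_def A_RCOSETS_def')

lemma quot_module_smult_rcos:
  assumes "ideal I R" and "r \<in> carrier R" and "s \<in> carrier R"
  shows "r \<odot>\<^bsub>quot_module R I\<^esub> (I +>\<^bsub>R\<^esub> s) = I +>\<^bsub>R\<^esub> (r \<otimes>\<^bsub>R\<^esub> s)"
  using assms by (simp add: quot_module_def FactRing_def ideal.rcoset_mult_add)

lemma quot_module_module:
  assumes "cring R" and "ideal I R"
  shows "module R (quot_module R I)"
proof -
  interpret R: cring R by fact
  interpret I: ideal I R by fact
  interpret Q: cring "R Quot I"
    using I.quotient_is_cring[OF assms(1)] .
  interpret h: ring_hom_cring R "R Quot I" "(+>\<^bsub>R\<^esub>) I"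
    using I.rcos_ring_hom_cring[OF assms(1)] .
  have smult: "a \<odot>\<^bsub>quot_module R I\<^esub> X = (I +>\<^bsub>R\<^esub> a) \<otimes>\<^bsub>R Quot I\<^esub> X" for a X
    by (simp add: quot_module_def)
  show ?thesis
  proof (rule moduleI)
    show "abelian_group (quot_module R I)"
      using abelian_groupE[OF Q.is_abelian_group]
      by (intro abelian_groupI) (auto simp: quot_module_def)
  qed (auto simp: smult quot_module_def Q.l_distr Q.r_distr Q.m_assoc assms(1))
qed

lemma quot_module_one_not_vanishes:
  assumes "primeideal p R"
  shows "\<not> vanishes_at R (quot_module R p) p (p +>\<^bsub>R\<^esub> \<one>\<^bsub>R\<^esub>)"
proof
  interpret P: primeideal p R by fact
  assume "vanishes_at R (quot_module R p) p (p +>\<^bsub>R\<^esub> \<one>\<^bsub>R\<^esub>)"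
  then obtain u where u: "u \<in> carrier R - p"
    and "u \<odot>\<^bsub>quot_module R p\<^esub> (p +>\<^bsub>R\<^esub> \<one>\<^bsub>R\<^esub>) = \<zero>\<^bsub>quot_module R p\<^esub>"
    unfolding vanishes_at_def by blast
  moreover have "u \<odot>\<^bsub>quot_module R p\<^esub> (p +>\<^bsub>R\<^esub> \<one>\<^bsub>R\<^esub>) = p +>\<^bsub>R\<^esub> u"
    using u by (simp add: quot_module_smult_rcos[OF P.is_ideal])
  moreover have "\<zero>\<^bsub>quot_module R p\<^esub> = p"
    by (simp add: quot_module_def FactRing_def)
  ultimately have "p +>\<^bsub>R\<^esub> u = p"
    by simp
  with u show False
    using P.rcos_const_imp_mem by blast
qed

lemma linear_on_vanishes_at:
  assumes "module R A" and "module R B" and "linear_on R A K B f"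
    and "K \<subseteq> carrier A" and "x \<in> K" and "vanishes_at R A p x"
  shows "vanishes_at R B p (f x)"
proof -
  interpret A: module R A by fact
  interpret B: module R B by fact
  obtain u where u: "u \<in> carrier R - p" "u \<odot>\<^bsub>A\<^esub> x = \<zero>\<^bsub>A\<^esub>"
    using assms(6) unfolding vanishes_at_def by blast
  have fx: "f x \<in> carrier B"
    using assms(3,5) unfolding linear_on_def by blast
  have "u \<odot>\<^bsub>B\<^esub> f x = f (u \<odot>\<^bsub>A\<^esub> x)"
    using assms(3,5) u(1) unfolding linear_on_def by auto
  also have "\<dots> = f (\<zero>\<^bsub>R\<^esub> \<odot>\<^bsub>A\<^esub> x)"
    using u assms(4,5) by auto
  also have "\<dots> = \<zero>\<^bsub>B\<^esub>"
    using assms(3,5) fx unfolding linear_on_def by simp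
  finally show ?thesis
    using u unfolding vanishes_at_def by blast
qed

lemma cyclic_submodule:
  assumes "module R M" and "m \<in> carrier M"
  shows "submodule ((\<lambda>r. r \<odot>\<^bsub>M\<^esub> m) ` carrier R) R M"
proof -
  interpret M: module R M by fact
  show ?thesis
  proof (rule M.submoduleI)
    show "\<zero>\<^bsub>M\<^esub> \<in> (\<lambda>r. r \<odot>\<^bsub>M\<^esub> m) ` carrier R"
      using assms(2) by (intro image_eqI[of _ _ "\<zero>\<^bsub>R\<^esub>"]) auto
    show "\<ominus>\<^bsub>M\<^esub> x \<in> (\<lambda>r. r \<odot>\<^bsub>M\<^esub> m) ` carrier R" if "x \<in> (\<lambda>r. r \<odot>\<^bsub>M\<^esub> m) ` carrier R" for x
      using that assms(2) by (auto simp: M.smult_l_minus[symmetric])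
    show "x \<oplus>\<^bsub>M\<^esub> y \<in> (\<lambda>r. r \<odot>\<^bsub>M\<^esub> m) ` carrier R"
      if "x \<in> (\<lambda>r. r \<odot>\<^bsub>M\<^esub> m) ` carrier R" "y \<in> (\<lambda>r. r \<odot>\<^bsub>M\<^esub> m) ` carrier R" for x y
      using that assms(2) by (auto simp: M.smult_l_distr[symmetric])
    show "a \<odot>\<^bsub>M\<^esub> x \<in> (\<lambda>r. r \<odot>\<^bsub>M\<^esub> m) ` carrier R"
      if "a \<in> carrier R" "x \<in> (\<lambda>r. r \<odot>\<^bsub>M\<^esub> m) ` carrier R" for a x
      using that assms(2) by (auto simp: M.smult_assoc1[symmetric])
  qed (use assms(2) in auto)
qed

lemma subquot_of_sum_if_subquotient:
  assumes "module R M" and "submodule K R M" and "linear_on R M K X f" and "f ` K = carrier X"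
  shows "subquot_of_sum R X M TYPE('c)"
proof -
  interpret M: module R M by fact
  define c :: 'c where "c = undefined"
  define single where "single m = (\<lambda>i. if i = c then m else \<zero>\<^bsub>M\<^esub>)" for m
  let ?D = "dsum_copies R M {c}"
  interpret D: module R ?D
    using assms(1) by (rule dsum_copies_module)
  have K: "K \<subseteq> carrier M" "\<And>x. x \<in> K \<Longrightarrow> \<ominus>\<^bsub>M\<^esub> x \<in> K"
    "\<And>x y. x \<in> K \<Longrightarrow> y \<in> K \<Longrightarrow> x \<oplus>\<^bsub>M\<^esub> y \<in> K"
    "\<And>a x. a \<in> carrier R \<Longrightarrow> x \<in> K \<Longrightarrow> a \<odot>\<^bsub>M\<^esub> x \<in> K"
    using M.submoduleE[OF assms(2)] by auto
  have zero: "\<zero>\<^bsub>M\<^esub> \<in> K"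
    using subgroup.one_closed[OF submodule.axioms(1)[OF assms(2)]] by simp
  have single_carrier: "single m \<in> carrier ?D" if "m \<in> carrier M" for m
  proof -
    have "{i. single m i \<noteq> \<zero>\<^bsub>M\<^esub>} \<subseteq> {c}"
      by (auto simp: single_def)
    then show ?thesis
      using that by (auto simp: dsum_copies_def single_def intro: finite_subset)
  qed
  have single_add: "single x \<oplus>\<^bsub>?D\<^esub> single y = single (x \<oplus>\<^bsub>M\<^esub> y)" for x y
    by (auto simp: dsum_copies_def single_def)
  have single_smult: "a \<odot>\<^bsub>?D\<^esub> single x = single (a \<odot>\<^bsub>M\<^esub> x)" if "a \<in> carrier R" for a x
    using that by (auto simp: dsum_copies_def single_def)
  have single_minus: "\<ominus>\<^bsub>?D\<^esub> single x = single (\<ominus>\<^bsub>M\<^esub> x)" if "x \<in> carrier M" for x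
    using dsum_copies_minus[OF assms(1) single_carrier[OF that]] by (auto simp: single_def)
  have "submodule (single ` K) R ?D"
  proof (rule D.submoduleI)
    show "\<zero>\<^bsub>?D\<^esub> \<in> single ` K"
      using zero by (intro image_eqI[of _ _ "\<zero>\<^bsub>M\<^esub>"]) (auto simp: dsum_copies_def single_def)
  qed (use K single_carrier single_add single_smult single_minus in auto)
  moreover have "linear_on R ?D (single ` K) X (\<lambda>x. f (x c))"
    using assms(3) K single_add single_smult unfolding linear_on_def by (auto simp: single_def)
  moreover have "(\<lambda>x. f (x c)) ` single ` K = carrier X"
    using assms(4) by (simp add: image_image single_def)
  ultimately show ?thesis
    unfolding subquot_of_sum_def by blast
qed

lemma rcos_eq_if_smult_eq:
  assumes "module R M" and "ideal p R" and "m \<in> carrier M" and "\<not> vanishes_at R M p m"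
    and "r \<in> carrier R" and "s \<in> carrier R" and "r \<odot>\<^bsub>M\<^esub> m = s \<odot>\<^bsub>M\<^esub> m"
  shows "p +>\<^bsub>R\<^esub> r = p +>\<^bsub>R\<^esub> s"
proof -
  interpret M: module R M by fact
  have "(r \<ominus>\<^bsub>R\<^esub> s) \<odot>\<^bsub>M\<^esub> m = \<zero>\<^bsub>M\<^esub>"
    using assms(3,5-7) by (simp add: a_minus_def M.smult_l_distr M.smult_l_minus M.r_neg)
  then have "r \<ominus>\<^bsub>R\<^esub> s \<in> p"
    using assms(4-6) unfolding vanishes_at_def by blast
  then show ?thesis
    using M.quotient_eq_iff_same_a_r_cos[OF assms(2,5,6)] by blast
qed

lemma cyclic_submodule_onto_quot_module:
  assumes "module R M" and "ideal p R" and "m \<in> carrier M" and "\<not> vanishes_at R M p m"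
  shows "\<exists>f. linear_on R M ((\<lambda>r. r \<odot>\<^bsub>M\<^esub> m) ` carrier R) (quot_module R p) f
    \<and> f ` (\<lambda>r. r \<odot>\<^bsub>M\<^esub> m) ` carrier R = carrier (quot_module R p)"
proof -
  interpret M: module R M by fact
  interpret P: ideal p R by fact
  define f where "f x = p +>\<^bsub>R\<^esub> (SOME r. r \<in> carrier R \<and> x = r \<odot>\<^bsub>M\<^esub> m)" for x
  have f: "f (r \<odot>\<^bsub>M\<^esub> m) = p +>\<^bsub>R\<^esub> r" if "r \<in> carrier R" for r
  proof -
    define s where "s = (SOME s. s \<in> carrier R \<and> r \<odot>\<^bsub>M\<^esub> m = s \<odot>\<^bsub>M\<^esub> m)"
    have "s \<in> carrier R \<and> r \<odot>\<^bsub>M\<^esub> m = s \<odot>\<^bsub>M\<^esub> m"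
      unfolding s_def by (rule someI[of _ r]) (simp add: that)
    then have "p +>\<^bsub>R\<^esub> s = p +>\<^bsub>R\<^esub> r"
      using that by (intro rcos_eq_if_smult_eq[OF assms]) auto
    then show ?thesis
      by (simp add: f_def s_def)
  qed
  have hom: "(+>\<^bsub>R\<^esub>) p \<in> ring_hom R (R Quot p)"
    by (rule P.rcos_ring_hom)
  have "linear_on R M ((\<lambda>r. r \<odot>\<^bsub>M\<^esub> m) ` carrier R) (quot_module R p) f"
    unfolding linear_on_def
  proof (intro conjI ballI)
    show "f \<in> (\<lambda>r. r \<odot>\<^bsub>M\<^esub> m) ` carrier R \<rightarrow> carrier (quot_module R p)"
      using f by (auto simp: quot_module_carrier)
  next
    fix x y assume "x \<in> (\<lambda>r. r \<odot>\<^bsub>M\<^esub> m) ` carrier R" "y \<in> (\<lambda>r. r \<odot>\<^bsub>M\<^esub> m) ` carrier R"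
    then obtain r s where rs: "r \<in> carrier R" "s \<in> carrier R" "x = r \<odot>\<^bsub>M\<^esub> m" "y = s \<odot>\<^bsub>M\<^esub> m"
      by blast
    then have "x \<oplus>\<^bsub>M\<^esub> y = (r \<oplus>\<^bsub>R\<^esub> s) \<odot>\<^bsub>M\<^esub> m"
      using assms(3) by (simp add: M.smult_l_distr)
    then show "f (x \<oplus>\<^bsub>M\<^esub> y) = f x \<oplus>\<^bsub>quot_module R p\<^esub> f y"
      using rs f ring_hom_add[OF hom] by (simp add: quot_module_def)
  next
    fix a x assume "a \<in> carrier R" "x \<in> (\<lambda>r. r \<odot>\<^bsub>M\<^esub> m) ` carrier R"
    then obtain r where r: "a \<in> carrier R" "r \<in> carrier R" "x = r \<odot>\<^bsub>M\<^esub> m"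
      by blast
    then have "a \<odot>\<^bsub>M\<^esub> x = (a \<otimes>\<^bsub>R\<^esub> r) \<odot>\<^bsub>M\<^esub> m"
      using assms(3) by (simp add: M.smult_assoc1)
    then show "f (a \<odot>\<^bsub>M\<^esub> x) = a \<odot>\<^bsub>quot_module R p\<^esub> f x"
      using r f by (simp add: quot_module_smult_rcos[OF assms(2)])
  qed
  moreover have "f ` (\<lambda>r. r \<odot>\<^bsub>M\<^esub> m) ` carrier R = carrier (quot_module R p)"
    using f by (simp add: image_image quot_module_carrier)
  ultimately show ?thesis
    by blast
qed

lemma nonvanishing_if_subquot_of_sum_quot_module:
  assumes "module R M" and "primeideal p R"
    and "subquot_of_sum R (quot_module R p) M TYPE('c)"
  shows "\<exists>m \<in> carrier M. \<not> vanishes_at R M p m"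
proof (rule ccontr)
  interpret P: primeideal p R by fact
  assume "\<not> ?thesis"
  then have all: "\<And>m. m \<in> carrier M \<Longrightarrow> vanishes_at R M p m"
    by blast
  obtain I :: "'c set" and K f where K: "submodule K R (dsum_copies R M I)"
    and f: "linear_on R (dsum_copies R M I) K (quot_module R p) f"
    and onto: "f ` K = carrier (quot_module R p)"
    using assms(3) unfolding subquot_of_sum_def by blast
  have "p +>\<^bsub>R\<^esub> \<one>\<^bsub>R\<^esub> \<in> f ` K"
    unfolding onto quot_module_carrier by simp
  then obtain k where k: "k \<in> K" "f k = p +>\<^bsub>R\<^esub> \<one>\<^bsub>R\<^esub>"
    by blast
  have K_sub: "K \<subseteq> carrier (dsum_copies R M I)"
    using K by (simp add: submodule_def subgroup_def)
  then have kD: "k \<in> carrier (dsum_copies R M I)"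
    using k(1) by blast
  then have "vanishes_at R (dsum_copies R M I) p k"
    using all by (intro dsum_copies_vanishes_at[OF assms(1,2) kD]) (simp add: dsum_copies_def)
  then have "vanishes_at R (quot_module R p) p (f k)"
    using linear_on_vanishes_at[OF dsum_copies_module[OF assms(1)]
        quot_module_module[OF P.is_cring P.is_ideal] f K_sub k(1)] by blast
  with k(2) show False
    using quot_module_one_not_vanishes[OF assms(2)] by simp
qed

lemma subquot_of_sum_quot_module_if_nonvanishing:
  assumes "module R M" and "primeideal p R"
    and "m \<in> carrier M" and "\<not> vanishes_at R M p m"
  shows "subquot_of_sum R (quot_module R p) M TYPE('c)"
proof -
  obtain f where "linear_on R M ((\<lambda>r. r \<odot>\<^bsub>M\<^esub> m) ` carrier R) (quot_module R p) f"
    "f ` (\<lambda>r. r \<odot>\<^bsub>M\<^esub> m) ` carrier R = carrier (quot_module R p)"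
    using cyclic_submodule_onto_quot_module[OF assms(1) primeideal.axioms(1)[OF assms(2)] assms(3,4)]
    by blast
  then show ?thesis
    by (rule subquot_of_sum_if_subquotient[OF assms(1) cyclic_submodule[OF assms(1,3)]])
qed

theorem lemma2p4:
  fixes R :: "('a, 'r) ring_scheme" and M :: "('a, 'b, 'm) module_scheme"
    and p :: "'a set"
  assumes "cring R" and "module R M" and "primeideal p R"
  shows "subquot_of_sum R (quot_module R p) M TYPE('c) \<longleftrightarrow> loc_nonzero R M p"
  unfolding loc_nonzero_iff_ex_nonvanishing[OF assms(2,3)]
  using nonvanishing_if_subquot_of_sum_quot_module[OF assms(2,3)]
    subquot_of_sum_quot_module_if_nonvanishing[OF assms(2,3)] by blast

end
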